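(* Let $d\ge1$. As an identity of rational functions in $s_1,\dots,s_d,t_1,\dots,t_d$ (in particular for all integer vectors $\vec s,\vec t$ at which all denominators on both sides are nonzero), $$\sum_{\sigma,\tau\in\mathcal{S}_d}\frac{\operatorname{sgn}\sigma\,\operatorname{sgn}\tau}{\prod_{i=1}^d\left(d+1-i+\sum_{j=i}^d\left(s_{\sigma(j)}+t_{\tau(j)}\right)\right)}=\prod_{1\le i<j\le d}(s_i-s_j)(t_i-t_j)\prod_{i,j=1}^d\frac{1}{1+s_i+t_j}.$$
   Context: $\mathcal{S}_d$ is the symmetric group on $\{1,\dots,d\}$ and $\operatorname{sgn}$ the sign of a permutation. *)

theory Defs
  imports "HOL-Combinatorics.Permutations"
begin

end

theory Submission
  imports Defs "HOL-Combinatorics.Multiset_Permutations" "Jordan_Normal_Form.Determinant"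
begin

(* Substituting tau = rho o sigma turns the double sum into
   sum_rho sgn rho * sum_sigma 1 / prod_i (b (sigma i) + ... + b (sigma d)),  b k = 1 + s k + t (rho k).
   The inner sum equals 1 / prod_k b k, the classical partial fraction identity: by induction on
   the first entry x of sigma, the terms with first entry x add up to b x / (sum b * prod b), and
   sum_x b x / sum b = 1.  What remains, sum_rho sgn rho * prod_k 1 / (1 + s k + t (rho k)), is the
   Cauchy determinant det (1 / (x i + y j)) with x = 1 + s, y = t, which is evaluated by induction
   after reducing against the last row and the last column. *)

fun prod_suffix_sums :: "('b \<Rightarrow> 'a::comm_semiring_1) \<Rightarrow> 'b list \<Rightarrow> 'a" where
  "prod_suffix_sums b [] = 1"
| "prod_suffix_sums b (x # xs) = sum_list (map b (x # xs)) * prod_suffix_sums b xs"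

lemma prod_suffix_sums_map_upt:
  "prod_suffix_sums b (map f [i..<n]) = (\<Prod>k=i..<n. \<Sum>j=k..<n. b (f j))"
proof (induction "n - i" arbitrary: i)
  case 0
  then show ?case by simp
next
  case (Suc m)
  then have "i < n" by simp
  moreover have "sum_list (map b (map f [i..<n])) = (\<Sum>j=i..<n. b (f j))"
    by (simp add: sum_set_upt_conv_sum_list_nat[symmetric] o_def)
  ultimately show ?case
    using Suc by (simp add: upt_conv_Cons prod.atLeast_Suc_lessThan)
qed

lemma Cons_in_permutations_of_set:
  "x \<in> A \<Longrightarrow> xs \<in> permutations_of_set (A - {x}) \<Longrightarrow> x # xs \<in> permutations_of_set A"
  using permutations_of_set_nonempty[of A] by blast

lemma sum_list_map_permutations_of_set:
  "xs \<in> permutations_of_set A \<Longrightarrow> sum_list (map b xs) = sum b A"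
  by (metis permutations_of_setD sum_list_distinct_conv_sum_set)

lemma sum_permutations_of_set_Cons:
  assumes "finite A" "A \<noteq> {}"
  shows "(\<Sum>xs\<in>permutations_of_set A. f xs) = (\<Sum>x\<in>A. \<Sum>xs\<in>permutations_of_set (A - {x}). f (x # xs))"
  by (subst permutations_of_set_nonempty[OF assms(2)], subst sum.UNION_disjoint_family)
     (auto simp: disjoint_family_on_def assms(1) sum.reindex)

lemma sum_permutations_of_set_inverse_prod_suffix_sums:
  fixes b :: "'b \<Rightarrow> 'a::field"
  assumes "finite A" and "\<forall>x\<in>A. b x \<noteq> 0"
    and "\<forall>xs\<in>permutations_of_set A. prod_suffix_sums b xs \<noteq> 0"
  shows "(\<Sum>xs\<in>permutations_of_set A. 1 / prod_suffix_sums b xs) = 1 / prod b A"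
  using assms
proof (induction A rule: finite_remove_induct)
  case empty
  then show ?case by simp
next
  case (remove A)
  have Cons_eq: "prod_suffix_sums b (x # xs) = sum b A * prod_suffix_sums b xs"
    if "x \<in> A" "xs \<in> permutations_of_set (A - {x})" for x xs
    using sum_list_map_permutations_of_set[OF Cons_in_permutations_of_set[OF that], of b] by simp
  have Cons_nz: "sum b A * prod_suffix_sums b xs \<noteq> 0"
    if "x \<in> A" "xs \<in> permutations_of_set (A - {x})" for x xs
    using remove.prems(2) Cons_in_permutations_of_set[OF that] Cons_eq[OF that] by metis
  have IH: "(\<Sum>xs\<in>permutations_of_set (A - {x}). 1 / prod_suffix_sums b xs) = 1 / prod b (A - {x})"
    if "x \<in> A" for x
    using remove.prems(1) Cons_nz[OF that] by (intro remove.IH[OF that]) auto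
  have "sum b A \<noteq> 0"
  proof -
    obtain x where x: "x \<in> A"
      using \<open>A \<noteq> {}\<close> by blast
    moreover obtain xs where "xs \<in> permutations_of_set (A - {x})"
      using remove.hyps(1) permutations_of_set_empty_iff[of "A - {x}"] by blast
    ultimately show ?thesis
      using Cons_nz by auto
  qed
  have "(\<Sum>xs\<in>permutations_of_set A. 1 / prod_suffix_sums b xs)
      = (\<Sum>x\<in>A. 1 / sum b A * (\<Sum>xs\<in>permutations_of_set (A - {x}). 1 / prod_suffix_sums b xs))"
    using remove.hyps
    by (simp add: sum_permutations_of_set_Cons Cons_eq sum_distrib_left del: prod_suffix_sums.simps)
  also have "\<dots> = (\<Sum>x\<in>A. b x / sum b A) / prod b A"
    using remove by (auto simp: IH sum_divide_distrib prod.remove intro!: sum.cong)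
  also have "\<dots> = 1 / prod b A"
    using \<open>sum b A \<noteq> 0\<close> by (simp flip: sum_divide_distrib)
  finally show ?case .
qed

lemma bij_betw_permutes_map_permutations_of_set:
  assumes "distinct xs"
  shows "bij_betw (\<lambda>\<sigma>. map \<sigma> xs) {\<sigma>. \<sigma> permutes set xs} (permutations_of_set (set xs))"
proof -
  have inj: "inj_on (\<lambda>\<sigma>. map \<sigma> xs) {\<sigma>. \<sigma> permutes set xs}"
  proof (rule inj_onI, rule ext)
    fix \<sigma> \<tau> x assume "\<sigma> \<in> {\<sigma>. \<sigma> permutes set xs}" "\<tau> \<in> {\<sigma>. \<sigma> permutes set xs}"
      and "map \<sigma> xs = map \<tau> xs"
    then show "\<sigma> x = \<tau> x"
      by (cases "x \<in> set xs") (auto simp: map_eq_conv permutes_not_in)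
  qed
  have "(\<lambda>\<sigma>. map \<sigma> xs) ` {\<sigma>. \<sigma> permutes set xs} \<subseteq> permutations_of_set (set xs)"
    using assms by (auto simp: permutes_image distinct_map permutes_inj_on)
  moreover have "card ((\<lambda>\<sigma>. map \<sigma> xs) ` {\<sigma>. \<sigma> permutes set xs}) = card (permutations_of_set (set xs))"
    using assms by (simp add: card_image[OF inj] card_permutations distinct_card)
  ultimately show ?thesis
    unfolding bij_betw_def using inj by (simp add: card_subset_eq)
qed

lemma sum_permutes_inverse_prod_suffix_sums:
  fixes b :: "nat \<Rightarrow> 'a::field"
  assumes "\<forall>\<sigma>. \<sigma> permutes {1..d} \<longrightarrow> (\<forall>i\<in>{1..d}. (\<Sum>j=i..d. b (\<sigma> j)) \<noteq> 0)"
    and "\<forall>k\<in>{1..d}. b k \<noteq> 0"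
  shows "(\<Sum>\<sigma> | \<sigma> permutes {1..d}. 1 / (\<Prod>i=1..d. \<Sum>j=i..d. b (\<sigma> j))) = 1 / prod b {1..d}"
proof -
  let ?list = "\<lambda>\<sigma>. map \<sigma> [1..<Suc d]"
  have bij: "bij_betw ?list {\<sigma>. \<sigma> permutes {1..d}} (permutations_of_set {1..d})"
    using bij_betw_permutes_map_permutations_of_set[of "[1..<Suc d]"]
    by (simp del: upt_Suc add: atLeastLessThanSuc_atLeastAtMost)
  have suffix: "(\<Prod>i=1..d. \<Sum>j=i..d. b (\<sigma> j)) = prod_suffix_sums b (?list \<sigma>)" for \<sigma>
    by (simp del: upt_Suc add: prod_suffix_sums_map_upt atLeastLessThanSuc_atLeastAtMost)
  have "(\<Sum>\<sigma> | \<sigma> permutes {1..d}. 1 / (\<Prod>i=1..d. \<Sum>j=i..d. b (\<sigma> j)))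
      = (\<Sum>xs\<in>permutations_of_set {1..d}. 1 / prod_suffix_sums b xs)"
    unfolding suffix by (rule sum.reindex_bij_betw[OF bij])
  also have "\<dots> = 1 / prod b {1..d}"
  proof (rule sum_permutations_of_set_inverse_prod_suffix_sums)
    show "\<forall>xs\<in>permutations_of_set {1..d}. prod_suffix_sums b xs \<noteq> 0"
    proof
      fix xs assume "xs \<in> permutations_of_set {1..d}"
      then obtain \<sigma> where \<sigma>: "\<sigma> permutes {1..d}" and "xs = ?list \<sigma>"
        using bij by (auto simp: bij_betw_def)
      then have "prod_suffix_sums b xs = (\<Prod>i=1..d. \<Sum>j=i..d. b (\<sigma> j))"
        by (simp only: suffix)
      then show "prod_suffix_sums b xs \<noteq> 0"
        using assms(1) \<sigma> by simp
    qed
  qed (use assms(2) in auto)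
  finally show ?thesis .
qed

lemma det_mat_scale_rows_cols:
  fixes f :: "nat \<times> nat \<Rightarrow> 'a::comm_ring_1"
  shows "det (mat n n (\<lambda>(i,j). a i * f (i,j) * c j)) = prod a {..<n} * prod c {..<n} * det (mat n n f)"
proof -
  have "det (mat n n (\<lambda>(i,j). a i * f (i,j) * c j))
      = (\<Sum>p | p permutes {0..<n}. signof p * (\<Prod>i=0..<n. a i * f (i, p i) * c (p i)))"
    by (simp add: det_def'[of _ n])
  also have "\<dots> = (\<Sum>p | p permutes {0..<n}.
                      prod a {..<n} * prod c {..<n} * (signof p * (\<Prod>i=0..<n. f (i, p i))))"
  proof (intro sum.cong refl)
    fix p assume "p \<in> {p. p permutes {0..<n}}"
    then have "(\<Prod>i=0..<n. c (p i)) = (\<Prod>i=0..<n. c i)"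
      using prod.permute[of p "{0..<n}" c] by (simp add: o_def)
    then show "signof p * (\<Prod>i=0..<n. a i * f (i, p i) * c (p i))
        = prod a {..<n} * prod c {..<n} * (signof p * (\<Prod>i=0..<n. f (i, p i)))"
      by (simp add: prod.distrib atLeast0LessThan mult_ac)
  qed
  also have "\<dots> = prod a {..<n} * prod c {..<n} * det (mat n n f)"
    by (simp add: det_def'[of _ n] sum_distrib_left)
  finally show ?thesis .
qed

lemma det_sub_last_row:
  fixes A :: "'a::comm_ring_1 mat"
  assumes A: "A \<in> carrier_mat (Suc m) (Suc m)"
  shows "det (mat (Suc m) (Suc m) (\<lambda>(i,j). if i < m then A $$ (i,j) - c i * A $$ (m,j) else A $$ (i,j)))
       = det A"
proof -
  define E :: "'a mat" where
    "E = mat (Suc m) (Suc m) (\<lambda>(i,j). if i = j then 1 else if j = m then - c i else 0)"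
  have E: "E \<in> carrier_mat (Suc m) (Suc m)" by (simp add: E_def)
  have "det E = prod_list (diag_mat E)"
    by (rule det_upper_triangular[OF _ E]) (auto simp: upper_triangular_def E_def)
  also have "diag_mat E = replicate (Suc m) 1"
    by (rule nth_equalityI) (auto simp del: upt_Suc replicate_Suc simp: diag_mat_def E_def)
  finally have det_E: "det E = 1" by simp
  have "(E * A) $$ (i,j) = (if i < m then A $$ (i,j) - c i * A $$ (m,j) else A $$ (i,j))"
    if "i < Suc m" "j < Suc m" for i j
  proof -
    have "(E * A) $$ (i,j) = (\<Sum>k=0..<Suc m. E $$ (i,k) * A $$ (k,j))"
      using that E A by (simp add: scalar_prod_def)
    also have "\<dots> = (\<Sum>k=0..<Suc m. (if k = i then A $$ (k,j) else 0)
                                    - (if k = m then (if i < m then c i * A $$ (k,j) else 0) else 0))"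
      using that by (intro sum.cong refl) (auto simp: E_def)
    also have "\<dots> = A $$ (i,j) - (if i < m then c i * A $$ (m,j) else 0)"
      using that by (simp only: sum_subtractf sum.delta finite_atLeastLessThan) simp
    finally show ?thesis by simp
  qed
  then have "mat (Suc m) (Suc m) (\<lambda>(i,j). if i < m then A $$ (i,j) - c i * A $$ (m,j) else A $$ (i,j))
      = E * A"
    using E A by (intro eq_matI) auto
  then show ?thesis using det_mult[OF E A] det_E by simp
qed

lemma det_sub_last_col:
  fixes A :: "'a::comm_ring_1 mat"
  assumes A: "A \<in> carrier_mat (Suc m) (Suc m)"
  shows "det (mat (Suc m) (Suc m) (\<lambda>(i,j). if j < m then A $$ (i,j) - c j * A $$ (i,m) else A $$ (i,j)))
       = det A"
proof -
  let ?M = "mat (Suc m) (Suc m) (\<lambda>(i,j). if j < m then A $$ (i,j) - c j * A $$ (i,m) else A $$ (i,j))"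
  have "det ?M = det ?M\<^sup>T"
    by (rule det_transpose[symmetric, OF mat_carrier])
  also have "?M\<^sup>T = mat (Suc m) (Suc m)
      (\<lambda>(i,j). if i < m then A\<^sup>T $$ (i,j) - c i * A\<^sup>T $$ (m,j) else A\<^sup>T $$ (i,j))"
    using A by (intro eq_matI) auto
  also have "det \<dots> = det A\<^sup>T"
    using A by (intro det_sub_last_row) simp
  also have "\<dots> = det A"
    using A by (rule det_transpose)
  finally show ?thesis .
qed

lemma det_last_row_unit:
  fixes A :: "'a::comm_ring_1 mat"
  assumes A: "A \<in> carrier_mat (Suc m) (Suc m)"
    and "\<forall>j<m. A $$ (m,j) = 0" and "A $$ (m,m) = 1"
  shows "det A = det (mat_delete A m m)"
proof -
  have "det A = (\<Sum>j<Suc m. A $$ (m,j) * cofactor A m j)"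
    by (rule laplace_expansion_row[OF A]) simp
  also have "\<dots> = cofactor A m m"
    using assms(2,3) by (simp add: less_Suc_eq)
  finally show ?thesis by (simp add: cofactor_def)
qed

definition cauchy_mat :: "nat \<Rightarrow> (nat \<Rightarrow> 'a::field) \<Rightarrow> (nat \<Rightarrow> 'a) \<Rightarrow> 'a mat" where
  "cauchy_mat n x y = mat n n (\<lambda>(i,j). 1 / (x i + y j))"

lemma det_cauchy_mat_Suc:
  fixes x y :: "nat \<Rightarrow> 'a::field"
  assumes nz: "\<And>i j. i \<le> m \<Longrightarrow> j \<le> m \<Longrightarrow> x i + y j \<noteq> 0"
  shows "det (cauchy_mat (Suc m) x y)
       = det (cauchy_mat m x y) * (\<Prod>i<m. (x i - x m) * (y i - y m))
         * (\<Prod>i<m. 1 / (x i + y m)) * (\<Prod>j<Suc m. 1 / (x m + y j))"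
proof -
  let ?n = "Suc m"
  define C where "C = cauchy_mat ?n x y"
  define B where "B = mat ?n ?n (\<lambda>(i,j). if i < m then 1 / (x i + y j) else 1)"
  define K where "K = mat ?n ?n (\<lambda>(i,j). if j < m then B $$ (i,j) - 1 * B $$ (i,m) else B $$ (i,j))"
  have C: "C \<in> carrier_mat ?n ?n" and B: "B \<in> carrier_mat ?n ?n" and K: "K \<in> carrier_mat ?n ?n"
    by (simp_all add: C_def cauchy_mat_def B_def K_def)
  have inverse_diff: "1 / (x i + y j) - 1 / (x k + y l) = (x k + y l - x i - y j) / ((x i + y j) * (x k + y l))"
    if "i \<le> m" "j \<le> m" "k \<le> m" "l \<le> m" for i j k l
    using nz[OF that(1,2)] nz[OF that(3,4)] by (simp add: field_simps)
  have "det C = det (mat ?n ?n (\<lambda>(i,j). if i < m then C $$ (i,j) - 1 * C $$ (m,j) else C $$ (i,j)))"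
    by (rule det_sub_last_row[OF C, symmetric])
  also have "mat ?n ?n (\<lambda>(i,j). if i < m then C $$ (i,j) - 1 * C $$ (m,j) else C $$ (i,j))
      = mat ?n ?n (\<lambda>(i,j). (if i < m then x m - x i else 1) * B $$ (i,j) * (1 / (x m + y j)))"
    by (intro eq_matI) (auto simp: C_def cauchy_mat_def B_def inverse_diff less_Suc_eq)
  also have "det \<dots> = (\<Prod>i<?n. if i < m then x m - x i else 1) * (\<Prod>j<?n. 1 / (x m + y j))
                        * det (mat ?n ?n (\<lambda>p. B $$ p))"
    by (rule det_mat_scale_rows_cols)
  also have "mat ?n ?n (\<lambda>p. B $$ p) = B"
    using B by (intro eq_matI) auto
  also have "det B = det K"
    unfolding K_def by (rule det_sub_last_col[OF B, symmetric])
  also have "\<dots> = det (mat_delete K m m)"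
    by (rule det_last_row_unit[OF K]) (simp_all add: K_def B_def)
  also have "mat_delete K m m = mat m m (\<lambda>(i,j). 1 / (x i + y m) * (1 / (x i + y j)) * (y m - y j))"
    by (intro eq_matI) (auto simp: mat_delete_def K_def B_def inverse_diff)
  also have "det \<dots> = (\<Prod>i<m. 1 / (x i + y m)) * (\<Prod>j<m. y m - y j) * det (cauchy_mat m x y)"
    unfolding cauchy_mat_def
    using det_mat_scale_rows_cols[where f = "\<lambda>(i,j). 1 / (x i + y j)" and n = m
        and a = "\<lambda>i. 1 / (x i + y m)" and c = "\<lambda>j. y m - y j"]
    by simp
  finally have "det C = (\<Prod>i<?n. if i < m then x m - x i else 1) * (\<Prod>j<?n. 1 / (x m + y j))
      * ((\<Prod>i<m. 1 / (x i + y m)) * (\<Prod>j<m. y m - y j) * det (cauchy_mat m x y))" .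
  moreover have "(\<Prod>i<?n. if i < m then x m - x i else 1) = (\<Prod>i<m. x m - x i)"
    by simp
  moreover have "(\<Prod>i<m. (x i - x m) * (y i - y m)) = (\<Prod>i<m. x m - x i) * (\<Prod>j<m. y m - y j)"
    by (simp add: prod.distrib[symmetric] algebra_simps)
  ultimately show ?thesis
    by (simp only: C_def mult_ac)
qed

lemma prod_triangle_lessThan_Suc:
  "(\<Prod>i<Suc m. \<Prod>j\<in>{i<..<Suc m}. f i j) = (\<Prod>i<m. \<Prod>j\<in>{i<..<m}. f i j) * (\<Prod>i<m. f i m)"
proof -
  have "{i<..<Suc m} = insert m {i<..<m}" if "i < m" for i
    using that by auto
  moreover have "{m<..<Suc m} = {}"
    by auto
  ultimately show ?thesis
    by (simp add: prod.distrib mult.commute)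
qed

lemma prod_square_lessThan_Suc:
  "(\<Prod>i<Suc m. \<Prod>j<Suc m. f i j) = (\<Prod>i<m. \<Prod>j<m. f i j) * (\<Prod>i<m. f i m) * (\<Prod>j<Suc m. f m j)"
proof -
  have "(\<Prod>i<Suc m. \<Prod>j<Suc m. f i j) = (\<Prod>i<m. \<Prod>j<Suc m. f i j) * (\<Prod>j<Suc m. f m j)"
    by (rule prod.lessThan_Suc)
  also have "(\<Prod>i<m. \<Prod>j<Suc m. f i j) = (\<Prod>i<m. (\<Prod>j<m. f i j) * f i m)"
    by simp
  finally show ?thesis
    by (simp only: prod.distrib)
qed

lemma det_cauchy_mat:
  fixes x y :: "nat \<Rightarrow> 'a::field"
  assumes "\<And>i j. i < n \<Longrightarrow> j < n \<Longrightarrow> x i + y j \<noteq> 0"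
  shows "det (cauchy_mat n x y)
       = (\<Prod>i<n. \<Prod>j\<in>{i<..<n}. (x i - x j) * (y i - y j)) * (\<Prod>i<n. \<Prod>j<n. 1 / (x i + y j))"
  using assms
proof (induction n)
  case 0
  then show ?case by (simp add: cauchy_mat_def)
next
  case (Suc m)
  have "det (cauchy_mat (Suc m) x y)
      = det (cauchy_mat m x y) * (\<Prod>i<m. (x i - x m) * (y i - y m))
        * (\<Prod>i<m. 1 / (x i + y m)) * (\<Prod>j<Suc m. 1 / (x m + y j))"
    using Suc.prems by (intro det_cauchy_mat_Suc) auto
  then show ?case
    using Suc by (simp only: prod_triangle_lessThan_Suc prod_square_lessThan_Suc mult_ac) simp
qed

lemma bij_betw_map_permutation_Suc:
  "bij_betw (map_permutation {0..<d} Suc) {p. p permutes {0..<d}} {\<rho>. \<rho> permutes {1..d}}"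
proof -
  have bij_Suc: "bij_betw Suc {0..<d} {1..d}"
    by (simp add: bij_betw_def atLeast0LessThan image_Suc_lessThan)
  moreover have "map_permutation {0..<d} Suc
      = (\<lambda>\<pi> x. if x \<in> {1..d} then Suc (\<pi> (inv_into {0..<d} Suc x)) else x)"
    using bij_Suc by (auto simp: fun_eq_iff map_permutation_def restrict_id_def bij_betw_def)
  ultimately show ?thesis
    by (simp only: bij_betw_permutations)
qed

lemma sum_permutes_atLeastAtMost_eq_det:
  fixes f :: "nat \<Rightarrow> nat \<Rightarrow> 'a::comm_ring_1"
  shows "(\<Sum>\<rho> | \<rho> permutes {1..d}. of_int (sign \<rho>) * (\<Prod>k=1..d. f k (\<rho> k)))
       = det (mat d d (\<lambda>(i,j). f (Suc i) (Suc j)))"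
proof -
  have "(\<Sum>\<rho> | \<rho> permutes {1..d}. of_int (sign \<rho>) * (\<Prod>k=1..d. f k (\<rho> k)))
      = (\<Sum>p | p permutes {0..<d}. of_int (sign (map_permutation {0..<d} Suc p))
               * (\<Prod>k=1..d. f k (map_permutation {0..<d} Suc p k)))"
    by (rule sum.reindex_bij_betw[OF bij_betw_map_permutation_Suc, symmetric])
  also have "\<dots> = (\<Sum>p | p permutes {0..<d}. signof p * (\<Prod>i=0..<d. f (Suc i) (Suc (p i))))"
  proof (intro sum.cong refl)
    fix p assume "p \<in> {p. p permutes {0..<d}}"
    then have p: "p permutes {0..<d}" by simp
    have "(\<Prod>k=1..d. f k (map_permutation {0..<d} Suc p k)) = (\<Prod>i=0..<d. f (Suc i) (Suc (p i)))"
      by (simp add: prod.atLeast1_atMost_eq atLeast0LessThan map_permutation_apply)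
    then show "of_int (sign (map_permutation {0..<d} Suc p))
               * (\<Prod>k=1..d. f k (map_permutation {0..<d} Suc p k))
             = signof p * (\<Prod>i=0..<d. f (Suc i) (Suc (p i)))"
      using p by (simp add: sign_map_permutation)
  qed
  also have "\<dots> = det (mat d d (\<lambda>(i,j). f (Suc i) (Suc j)))"
    by (simp add: det_def'[of _ d])
  finally show ?thesis .
qed

lemma prod_greaterThanAtMost_Suc_shift:
  "(\<Prod>j\<in>{Suc i<..d}. g j) = (\<Prod>j\<in>{i<..<d}. g (Suc j))"
proof -
  have "{Suc i<..d} = Suc ` {i<..<d}"
    unfolding atLeastSucLessThan_greaterThanLessThan[symmetric]
      atLeastSucAtMost_greaterThanAtMost[symmetric]
    by (simp flip: atLeastLessThanSuc_atLeastAtMost)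
  then show ?thesis
    by (simp add: prod.reindex)
qed

lemma sum_permutes_sign_cauchy:
  fixes x y :: "nat \<Rightarrow> 'a::field"
  assumes "\<forall>i\<in>{1..d}. \<forall>j\<in>{1..d}. x i + y j \<noteq> 0"
  shows "(\<Sum>\<rho> | \<rho> permutes {1..d}. of_int (sign \<rho>) * (\<Prod>k=1..d. 1 / (x k + y (\<rho> k))))
       = (\<Prod>i=1..d. \<Prod>j\<in>{i<..d}. (x i - x j) * (y i - y j)) * (\<Prod>i=1..d. \<Prod>j=1..d. 1 / (x i + y j))"
proof -
  have "(\<Sum>\<rho> | \<rho> permutes {1..d}. of_int (sign \<rho>) * (\<Prod>k=1..d. 1 / (x k + y (\<rho> k))))
      = det (cauchy_mat d (\<lambda>i. x (Suc i)) (\<lambda>j. y (Suc j)))"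
    unfolding cauchy_mat_def by (rule sum_permutes_atLeastAtMost_eq_det)
  also have "\<dots> = (\<Prod>i<d. \<Prod>j\<in>{i<..<d}. (x (Suc i) - x (Suc j)) * (y (Suc i) - y (Suc j)))
                 * (\<Prod>i<d. \<Prod>j<d. 1 / (x (Suc i) + y (Suc j)))"
    using assms by (intro det_cauchy_mat) auto
  also have "\<dots> = (\<Prod>i=1..d. \<Prod>j\<in>{i<..d}. (x i - x j) * (y i - y j))
                 * (\<Prod>i=1..d. \<Prod>j=1..d. 1 / (x i + y j))"
    by (simp add: prod.atLeast1_atMost_eq prod_greaterThanAtMost_Suc_shift)
  finally show ?thesis .
qed

lemma sum_sign_pairs_compose_right:
  fixes g :: "('b \<Rightarrow> 'b) \<Rightarrow> ('b \<Rightarrow> 'b) \<Rightarrow> 'a::field"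
  assumes "finite S"
  shows "(\<Sum>\<sigma> | \<sigma> permutes S. \<Sum>\<tau> | \<tau> permutes S. of_int (sign \<sigma> * sign \<tau>) / g \<sigma> \<tau>)
       = (\<Sum>\<sigma> | \<sigma> permutes S. \<Sum>\<rho> | \<rho> permutes S. of_int (sign \<rho>) / g \<sigma> (\<rho> \<circ> \<sigma>))"
proof (rule sum.cong[OF refl])
  fix \<sigma> assume "\<sigma> \<in> {\<sigma>. \<sigma> permutes S}"
  then have \<sigma>: "\<sigma> permutes S" by simp
  have "sign \<sigma> * sign (\<rho> \<circ> \<sigma>) = sign \<rho>" if "\<rho> permutes S" for \<rho>
  proof -
    have "permutation \<rho>" "permutation \<sigma>"
      using that \<sigma> assms by (auto simp: permutation_permutes)
    then show ?thesis
      by (simp add: sign_compose mult.left_commute)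
  qed
  then show "(\<Sum>\<tau> | \<tau> permutes S. of_int (sign \<sigma> * sign \<tau>) / g \<sigma> \<tau>)
      = (\<Sum>\<rho> | \<rho> permutes S. of_int (sign \<rho>) / g \<sigma> (\<rho> \<circ> \<sigma>))"
    by (subst sum_permutations_compose_right[OF \<sigma>]) simp
qed

lemma sum_permutes_pairs_inverse_prod_suffix_sums:
  fixes s t :: "nat \<Rightarrow> 'a::field"
  assumes "\<forall>\<sigma> \<tau>. \<sigma> permutes {1..d} \<longrightarrow> \<tau> permutes {1..d} \<longrightarrow>
          (\<forall>i\<in>{1..d}. (\<Sum>j=i..d. s (\<sigma> j) + t (\<tau> j)) \<noteq> 0)"
    and "\<forall>i\<in>{1..d}. \<forall>j\<in>{1..d}. s i + t j \<noteq> 0"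
  shows "(\<Sum>\<sigma> | \<sigma> permutes {1..d}. \<Sum>\<tau> | \<tau> permutes {1..d}.
            of_int (sign \<sigma> * sign \<tau>) / (\<Prod>i=1..d. \<Sum>j=i..d. s (\<sigma> j) + t (\<tau> j)))
       = (\<Sum>\<rho> | \<rho> permutes {1..d}. of_int (sign \<rho>) * (\<Prod>k=1..d. 1 / (s k + t (\<rho> k))))"
proof -
  let ?P = "{\<sigma>. \<sigma> permutes {1..d}}"
  have inner: "(\<Sum>\<sigma>\<in>?P. 1 / (\<Prod>i=1..d. \<Sum>j=i..d. s (\<sigma> j) + t (\<rho> (\<sigma> j))))
      = 1 / (\<Prod>k=1..d. s k + t (\<rho> k))" if \<rho>: "\<rho> \<in> ?P" for \<rho>
  proof (rule sum_permutes_inverse_prod_suffix_sums[where b = "\<lambda>k. s k + t (\<rho> k)"])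
    show "\<forall>\<sigma>. \<sigma> permutes {1..d} \<longrightarrow> (\<forall>i\<in>{1..d}. (\<Sum>j=i..d. s (\<sigma> j) + t (\<rho> (\<sigma> j))) \<noteq> 0)"
      using assms(1) \<rho> permutes_compose[of _ "{1..d}" \<rho>] by fastforce
    show "\<forall>k\<in>{1..d}. s k + t (\<rho> k) \<noteq> 0"
      using assms(2) \<rho> permutes_in_image[of \<rho> "{1..d}"] by simp
  qed
  have "(\<Sum>\<sigma>\<in>?P. \<Sum>\<tau>\<in>?P. of_int (sign \<sigma> * sign \<tau>) / (\<Prod>i=1..d. \<Sum>j=i..d. s (\<sigma> j) + t (\<tau> j)))
      = (\<Sum>\<sigma>\<in>?P. \<Sum>\<rho>\<in>?P. of_int (sign \<rho>) / (\<Prod>i=1..d. \<Sum>j=i..d. s (\<sigma> j) + t (\<rho> (\<sigma> j))))"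
    by (simp only: sum_sign_pairs_compose_right[OF finite_atLeastAtMost] o_apply)
  also have "\<dots> = (\<Sum>\<rho>\<in>?P. of_int (sign \<rho>) *
                    (\<Sum>\<sigma>\<in>?P. 1 / (\<Prod>i=1..d. \<Sum>j=i..d. s (\<sigma> j) + t (\<rho> (\<sigma> j)))))"
    by (subst sum.swap) (simp add: sum_distrib_left)
  also have "\<dots> = (\<Sum>\<rho>\<in>?P. of_int (sign \<rho>) * (\<Prod>k=1..d. 1 / (s k + t (\<rho> k))))"
  proof (intro sum.cong refl)
    fix \<rho> assume "\<rho> \<in> ?P"
    then show "of_int (sign \<rho>) * (\<Sum>\<sigma>\<in>?P. 1 / (\<Prod>i=1..d. \<Sum>j=i..d. s (\<sigma> j) + t (\<rho> (\<sigma> j))))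
        = of_int (sign \<rho>) * (\<Prod>k=1..d. 1 / (s k + t (\<rho> k)))"
      by (simp only: inner) (simp add: prod_dividef)
  qed
  finally show ?thesis .
qed

theorem mainTheorem3:
  fixes d :: nat and s t :: "nat \<Rightarrow> 'a::field_char_0"
  assumes "d \<ge> 1"
    and "\<forall>\<sigma> \<tau>. \<sigma> permutes {1..d} \<longrightarrow> \<tau> permutes {1..d} \<longrightarrow>
          (\<forall>i\<in>{1..d}. of_nat (d + 1 - i) + (\<Sum>j=i..d. s (\<sigma> j) + t (\<tau> j)) \<noteq> 0)"
    and "\<forall>i\<in>{1..d}. \<forall>j\<in>{1..d}. 1 + s i + t j \<noteq> 0"
  shows "(\<Sum>\<sigma>\<in>{\<sigma>. \<sigma> permutes {1..d}}. \<Sum>\<tau>\<in>{\<tau>. \<tau> permutes {1..d}}.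
            of_int (sign \<sigma> * sign \<tau>) /
            (\<Prod>i=1..d. of_nat (d + 1 - i) + (\<Sum>j=i..d. s (\<sigma> j) + t (\<tau> j))))
       = (\<Prod>i=1..d. \<Prod>j\<in>{i<..d}. (s i - s j) * (t i - t j))
         * (\<Prod>i=1..d. \<Prod>j=1..d. 1 / (1 + s i + t j))"
proof -
  have shift: "of_nat (d + 1 - i) + (\<Sum>j=i..d. s (\<sigma> j) + t (\<tau> j)) = (\<Sum>j=i..d. (1 + s (\<sigma> j)) + t (\<tau> j))"
    for \<sigma> \<tau> :: "nat \<Rightarrow> nat" and i
    by (simp add: sum.distrib)
  have "(\<Sum>\<sigma> | \<sigma> permutes {1..d}. \<Sum>\<tau> | \<tau> permutes {1..d}. of_int (sign \<sigma> * sign \<tau>) /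
            (\<Prod>i=1..d. \<Sum>j=i..d. (1 + s (\<sigma> j)) + t (\<tau> j)))
      = (\<Sum>\<rho> | \<rho> permutes {1..d}. of_int (sign \<rho>) * (\<Prod>k=1..d. 1 / ((1 + s k) + t (\<rho> k))))"
    using assms(2,3) unfolding shift by (rule sum_permutes_pairs_inverse_prod_suffix_sums)
  also have "\<dots> = (\<Prod>i=1..d. \<Prod>j\<in>{i<..d}. (s i - s j) * (t i - t j))
                 * (\<Prod>i=1..d. \<Prod>j=1..d. 1 / (1 + s i + t j))"
    using assms(3) by (subst sum_permutes_sign_cauchy) simp_all
  finally show ?thesis
    by (simp only: shift)
qed

end
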